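(* Let $V$ be a bounded operator on $H^2$. Then $V$ is a Toeplitz operator if and only if the Sarason Sub-Symbol $R_f$ of $V$ is independent of the choice of $f\in H^2\setminus\{0\}$, i.e. $R_f=R_g$ for all nonzero $f,g\in H^2$.
   Context: $H^2=H^2(\mathbb{T})$ is the Hardy space, viewed as the closed subspace of $L^2(\mathbb{T})$ spanned by $\{e^{in\theta}\}_{n\ge0}$; $z=e^{i\theta}$ on the circle; $S=M_z$ is the shift. A bounded operator $V$ on $H^2$ is Toeplitz if $S^*VS=V$, equivalently $V=P M_\phi$ for some $\phi\in L^\infty(\mathbb{T})$, where $P$ is the orthogonal projection $L^2(\mathbb{T})\to H^2$ and $M_\phi f=\phi f$. For an operator $T$ with shift-invariant domain $D(T)$ and $f\in D(T)\setminus\{0\}$, the Sarason Sub-Symbol corresponding to $f$ is $R_f=h_f/f$, where $h_f=\sum_{n=1}^\infty \langle T(z^nf),1\rangle e^{-in\theta}+\sum_{n=0}^\infty\langle Tf,z^n\rangle e^{in\theta}$, the series being interpreted as a (formal) trigonometric series convergent in some sense. *)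

theory Defs
  imports "HOL-Analysis.Analysis"
begin

text \<open>Model of the Hardy space H^2 via its (unitarily equivalent) Fourier-coefficient
  picture: f in H^2 is identified with its coefficient sequence (f n = inner f z^n),
  and H^2 is the space of square-summable sequences indexed by nat.\<close>

definition H2 :: "(nat \<Rightarrow> complex) set" where
  "H2 = {a. summable (\<lambda>n. (cmod (a n))\<^sup>2)}"

definition h2_norm :: "(nat \<Rightarrow> complex) \<Rightarrow> real" where
  "h2_norm a = sqrt (\<Sum>n. (cmod (a n))\<^sup>2)"

definition shift :: "(nat \<Rightarrow> complex) \<Rightarrow> (nat \<Rightarrow> complex)" where
  "shift a = (\<lambda>n. if n = 0 then 0 else a (n - 1))"

definition shift_adj :: "(nat \<Rightarrow> complex) \<Rightarrow> (nat \<Rightarrow> complex)" where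
  "shift_adj a = (\<lambda>n. a (Suc n))"

text \<open>Bounded (linear) operators on H^2; values outside H^2 are irrelevant.\<close>
definition bounded_op_H2 :: "((nat \<Rightarrow> complex) \<Rightarrow> (nat \<Rightarrow> complex)) \<Rightarrow> bool" where
  "bounded_op_H2 V \<longleftrightarrow>
     (\<forall>a\<in>H2. V a \<in> H2) \<and>
     (\<forall>a\<in>H2. \<forall>b\<in>H2. V (\<lambda>n. a n + b n) = (\<lambda>n. V a n + V b n)) \<and>
     (\<forall>c. \<forall>a\<in>H2. V (\<lambda>n. c * a n) = (\<lambda>n. c * V a n)) \<and>
     (\<exists>C. \<forall>a\<in>H2. h2_norm (V a) \<le> C * h2_norm a)"

definition toeplitz :: "((nat \<Rightarrow> complex) \<Rightarrow> (nat \<Rightarrow> complex)) \<Rightarrow> bool" where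
  "toeplitz V \<longleftrightarrow> (\<forall>a\<in>H2. shift_adj (V (shift a)) = V a)"

text \<open>The formal trigonometric series h_f, as its two-sided coefficient sequence:
  coefficient at -n (n >= 1) is inner (V (z^n f)) 1, coefficient at n >= 0 is inner (V f) z^n.\<close>
definition h_ser :: "((nat \<Rightarrow> complex) \<Rightarrow> (nat \<Rightarrow> complex)) \<Rightarrow> (nat \<Rightarrow> complex) \<Rightarrow> int \<Rightarrow> complex" where
  "h_ser V f k = (if 0 \<le> k then V f (nat k) else V ((shift ^^ nat (- k)) f) 0)"

text \<open>Formal (Cauchy/convolution) product of a two-sided series with a one-sided
  (analytic) series, coefficient n: sum over m of h(n-m) g(m).\<close>
definition conv_coeff :: "(int \<Rightarrow> complex) \<Rightarrow> (nat \<Rightarrow> complex) \<Rightarrow> int \<Rightarrow> complex" where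
  "conv_coeff h g n = (\<Sum>m. h (n - int m) * g m)"

definition conv_ok :: "(int \<Rightarrow> complex) \<Rightarrow> (nat \<Rightarrow> complex) \<Rightarrow> int \<Rightarrow> bool" where
  "conv_ok h g n \<longleftrightarrow> summable (\<lambda>m. cmod (h (n - int m) * g m))"

text \<open>R_f = R_g, i.e. h_f / f = h_g / g, read as the (convergent) cross-multiplied
  identity h_f * g = h_g * f of formal trigonometric series.\<close>
definition sub_symbol_eq :: "((nat \<Rightarrow> complex) \<Rightarrow> (nat \<Rightarrow> complex)) \<Rightarrow> (nat \<Rightarrow> complex) \<Rightarrow> (nat \<Rightarrow> complex) \<Rightarrow> bool" where
  "sub_symbol_eq V f g \<longleftrightarrow>
     (\<forall>n. conv_ok (h_ser V f) g n \<and> conv_ok (h_ser V g) f n \<and>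
          conv_coeff (h_ser V f) g n = conv_coeff (h_ser V g) f n)"

end

(*
  Toeplitz means (V (S a))_{i+1} = (V a)_i.  For such V every coefficient of h_f is a coefficient
  of V applied to a shift of f, so the coefficients of h_f are square summable with a bound
  K |f|^2, and h_{e_j} is the translate by j of the symbol c = h_{e_0}.  For finitely supported
  f and g both h_f * g and h_g * f are therefore the double sum of f_l g_m c_{n-l-m}; Cauchy-Schwarz
  makes each convolution coefficient continuous in f and in g, which extends the identity to all
  of H^2.  Conversely, R_{e_j} = R_{e_0} says precisely that h_{e_j} is the translate of h_{e_0},
  i.e. (V e_{j+1})_{i+1} = (V e_j)_i, and linearity and continuity give the Toeplitz identity.
*)

theory Submission
  imports Defs
begin

definition h2_sqnorm :: "(nat \<Rightarrow> complex) \<Rightarrow> real" where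
  "h2_sqnorm a = (\<Sum>n. (cmod (a n))\<^sup>2)"

definition basis :: "nat \<Rightarrow> nat \<Rightarrow> complex" where
  "basis j = (\<lambda>n. if n = j then 1 else 0)"

definition trunc :: "nat \<Rightarrow> (nat \<Rightarrow> complex) \<Rightarrow> nat \<Rightarrow> complex" where
  "trunc M a = (\<lambda>n. if n < M then a n else 0)"

lemma h2_sqnorm_nonneg: "a \<in> H2 \<Longrightarrow> 0 \<le> h2_sqnorm a"
  unfolding h2_sqnorm_def H2_def by (intro suminf_nonneg) auto

lemma norm_add_sq_le: "(cmod (x + y))\<^sup>2 \<le> 2 * (cmod x)\<^sup>2 + 2 * (cmod y)\<^sup>2"
proof -
  have "(cmod (x + y))\<^sup>2 \<le> (cmod x + cmod y)\<^sup>2"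
    by (intro power_mono norm_triangle_ineq) auto
  also have "\<dots> \<le> 2 * (cmod x)\<^sup>2 + 2 * (cmod y)\<^sup>2"
    using sum_squares_bound[of "cmod x" "cmod y"] by (simp add: power2_sum)
  finally show ?thesis .
qed

lemma H2_add: "a \<in> H2 \<Longrightarrow> b \<in> H2 \<Longrightarrow> (\<lambda>n. a n + b n) \<in> H2"
  unfolding H2_def mem_Collect_eq
  by (rule summable_comparison_test'[where g = "\<lambda>n. 2 * (cmod (a n))\<^sup>2 + 2 * (cmod (b n))\<^sup>2" and N = 0])
    (auto intro: summable_add summable_mult simp: norm_add_sq_le)

lemma H2_scale: "a \<in> H2 \<Longrightarrow> (\<lambda>n. c * a n) \<in> H2"
  unfolding H2_def by (simp add: norm_mult power_mult_distrib summable_mult)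

lemma H2_diff: "a \<in> H2 \<Longrightarrow> b \<in> H2 \<Longrightarrow> (\<lambda>n. a n - b n) \<in> H2"
  using H2_add[of a "\<lambda>n. (-1) * b n"] H2_scale[of b "-1"] by simp

lemma H2_finite_support: "finite S \<Longrightarrow> (\<And>n. n \<notin> S \<Longrightarrow> a n = 0) \<Longrightarrow> a \<in> H2"
  unfolding H2_def mem_Collect_eq by (rule summable_finite[of S]) auto

lemma H2_zero: "(\<lambda>_. 0) \<in> H2"
  by (rule H2_finite_support[of "{}"]) auto

lemma H2_trunc: "trunc M a \<in> H2"
  by (rule H2_finite_support[of "{..<M}"]) (auto simp: trunc_def)

lemma H2_basis: "basis j \<in> H2"
  by (rule H2_finite_support[of "{j}"]) (auto simp: basis_def)

lemma basis_nonzero: "basis j \<noteq> (\<lambda>_. 0)"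
  by (metis basis_def one_neq_zero)

lemma shift_in_H2:
  assumes "a \<in> H2" shows "shift a \<in> H2" and "h2_sqnorm (shift a) = h2_sqnorm a"
proof -
  have "(\<lambda>n. (cmod (shift a (Suc n)))\<^sup>2) sums h2_sqnorm a"
    using assms by (simp add: H2_def h2_sqnorm_def shift_def summable_sums)
  then have "(\<lambda>n. (cmod (shift a n))\<^sup>2) sums h2_sqnorm a"
    using sums_Suc_iff[of "\<lambda>n. (cmod (shift a n))\<^sup>2"] by (simp add: shift_def)
  then show "shift a \<in> H2" "h2_sqnorm (shift a) = h2_sqnorm a"
    unfolding H2_def h2_sqnorm_def by (auto simp: sums_iff)
qed

lemma funpow_shift_in_H2:
  "a \<in> H2 \<Longrightarrow> (shift ^^ p) a \<in> H2 \<and> h2_sqnorm ((shift ^^ p) a) = h2_sqnorm a"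
  by (induction p) (auto simp: shift_in_H2)

lemma funpow_shift_add: "(shift ^^ p) (\<lambda>n. a n + b n) = (\<lambda>n. (shift ^^ p) a n + (shift ^^ p) b n)"
  by (induction p) (auto simp: shift_def)

lemma funpow_shift_scale: "(shift ^^ p) (\<lambda>n. c * a n) = (\<lambda>n. c * (shift ^^ p) a n)"
  by (induction p) (auto simp: shift_def)

lemma funpow_shift_diff: "(shift ^^ p) (\<lambda>n. a n - b n) = (\<lambda>n. (shift ^^ p) a n - (shift ^^ p) b n)"
  by (induction p) (auto simp: shift_def)

lemma shift_basis: "shift (basis j) = basis (Suc j)"
  by (rule ext) (auto simp: shift_def basis_def)

lemma funpow_shift_basis: "(shift ^^ p) (basis j) = basis (j + p)"
  by (induction p) (auto simp: shift_basis)

lemma trunc_Suc: "trunc (Suc M) a = (\<lambda>n. trunc M a n + a M * basis M n)"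
  by (rule ext) (auto simp: trunc_def basis_def less_Suc_eq)

lemma sum_norm_sq_le_h2_sqnorm: "a \<in> H2 \<Longrightarrow> finite S \<Longrightarrow> (\<Sum>n\<in>S. (cmod (a n))\<^sup>2) \<le> h2_sqnorm a"
  unfolding h2_sqnorm_def H2_def by (rule sum_le_suminf) auto

lemma h2_sqnorm_trunc_tendsto:
  assumes "a \<in> H2" shows "(\<lambda>M. h2_sqnorm (\<lambda>n. a n - trunc M a n)) \<longlonglongrightarrow> 0"
proof -
  let ?x = "\<lambda>n. (cmod (a n))\<^sup>2"
  have x: "summable ?x" using assms by (simp add: H2_def)
  have "h2_sqnorm (\<lambda>n. a n - trunc M a n) = (\<Sum>n. ?x (n + M))" for M
  proof -
    let ?y = "\<lambda>n. if n < M then 0 else ?x n"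
    have "summable ?y" by (rule summable_comparison_test'[OF x, of 0]) auto
    then have "suminf ?y = (\<Sum>n. ?y (n + M)) + sum ?y {..<M}"
      by (rule suminf_split_initial_segment)
    moreover have "(\<lambda>n. (cmod (a n - trunc M a n))\<^sup>2) = ?y"
      by (auto simp: trunc_def)
    ultimately show ?thesis by (simp add: h2_sqnorm_def)
  qed
  with suminf_exist_split2[OF x] show ?thesis by simp
qed

lemma tendsto_of_sq_dist_le:
  fixes X :: "nat \<Rightarrow> complex"
  assumes "\<And>N. (cmod (X N - L))\<^sup>2 \<le> c * e N" and "e \<longlonglongrightarrow> 0"
  shows "X \<longlonglongrightarrow> L"
proof -
  have "(\<lambda>N. sqrt (c * e N)) \<longlonglongrightarrow> sqrt (c * 0)" by (intro tendsto_intros assms)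
  then have bound_tendsto: "(\<lambda>N. sqrt (c * e N)) \<longlonglongrightarrow> 0" by simp
  have "norm (X N - L) \<le> sqrt (c * e N)" for N
    using assms(1) by (rule real_le_rsqrt)
  then have "(\<lambda>N. X N - L) \<longlonglongrightarrow> 0"
    by (intro Lim_null_comparison[OF _ bound_tendsto]) simp
  then show ?thesis by (simp add: LIM_zero_iff)
qed

lemma cauchy_schwarz_H2:
  assumes x: "x \<in> H2" and y: "y \<in> H2"
  shows "summable (\<lambda>m. cmod (x m * y m))"
    and "(cmod (\<Sum>m. x m * y m))\<^sup>2 \<le> h2_sqnorm x * h2_sqnorm y"
proof -
  have sx: "summable (\<lambda>m. (cmod (x m))\<^sup>2)" and sy: "summable (\<lambda>m. (cmod (y m))\<^sup>2)"
    using x y by (simp_all add: H2_def)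
  have "cmod (x m * y m) \<le> (cmod (x m))\<^sup>2 + (cmod (y m))\<^sup>2" for m
  proof -
    have "2 * (cmod (x m) * cmod (y m)) \<le> (cmod (x m))\<^sup>2 + (cmod (y m))\<^sup>2"
      using sum_squares_bound[of "cmod (x m)" "cmod (y m)"] by (simp add: mult.assoc)
    moreover have "0 \<le> cmod (x m) * cmod (y m)" by simp
    ultimately have "cmod (x m) * cmod (y m) \<le> (cmod (x m))\<^sup>2 + (cmod (y m))\<^sup>2" by linarith
    then show ?thesis by (simp add: norm_mult)
  qed
  then show s: "summable (\<lambda>m. cmod (x m * y m))"
    by (intro summable_comparison_test'[OF summable_add[OF sx sy], of 0]) auto
  let ?X = "h2_sqnorm x" and ?Y = "h2_sqnorm y"
  have "(\<Sum>m. cmod (x m * y m)) \<le> sqrt ?X * sqrt ?Y"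
  proof (rule suminf_le_const[OF s])
    fix M
    have "(\<Sum>m<M. cmod (x m * y m)) = (\<Sum>m<M. \<bar>cmod (x m)\<bar> * \<bar>cmod (y m)\<bar>)"
      by (simp add: norm_mult)
    also have "\<dots> \<le> L2_set (\<lambda>m. cmod (x m)) {..<M} * L2_set (\<lambda>m. cmod (y m)) {..<M}"
      by (rule L2_set_mult_ineq)
    also have "\<dots> \<le> sqrt ?X * sqrt ?Y"
      unfolding L2_set_def
      by (intro mult_mono real_sqrt_le_mono sum_norm_sq_le_h2_sqnorm x y)
        (auto intro: h2_sqnorm_nonneg[OF x] sum_nonneg)
    finally show "(\<Sum>m<M. cmod (x m * y m)) \<le> sqrt ?X * sqrt ?Y" .
  qed
  then have "cmod (\<Sum>m. x m * y m) \<le> sqrt ?X * sqrt ?Y"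
    using summable_norm[OF s] by linarith
  then have "(cmod (\<Sum>m. x m * y m))\<^sup>2 \<le> (sqrt ?X * sqrt ?Y)\<^sup>2"
    by (intro power_mono) auto
  also have "\<dots> = ?X * ?Y"
    using h2_sqnorm_nonneg[OF x] h2_sqnorm_nonneg[OF y] by (simp add: power_mult_distrib)
  finally show "(cmod (\<Sum>m. x m * y m))\<^sup>2 \<le> ?X * ?Y" .
qed

text \<open>Since \<open>nat\<close> truncates negative integers to 0, this covers both branches of \<open>h_ser_def\<close>.\<close>

lemma h_ser_eq: "h_ser V f k = V ((shift ^^ nat (- k)) f) (nat k)"
  by (simp add: h_ser_def)

lemma conv_coeff_trunc: "conv_coeff h (trunc N g) n = (\<Sum>m<N. h (n - int m) * g m)"
  unfolding conv_coeff_def by (subst suminf_finite[of "{..<N}"]) (auto simp: trunc_def)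

lemma conv_coeff_basis: "conv_coeff h (basis j) n = h (n - int j)"
  unfolding conv_coeff_def by (subst suminf_finite[of "{j}"]) (auto simp: basis_def)

lemma h_ser_basis_translate_if_sub_symbol_eq:
  "sub_symbol_eq V (basis j) (basis 0) \<Longrightarrow> h_ser V (basis j) k = h_ser V (basis 0) (k - int j)"
  unfolding sub_symbol_eq_def conv_coeff_basis by simp

locale bounded_H2_operator =
  fixes V :: "(nat \<Rightarrow> complex) \<Rightarrow> nat \<Rightarrow> complex" and K :: real
  assumes maps_H2: "a \<in> H2 \<Longrightarrow> V a \<in> H2"
    and add: "a \<in> H2 \<Longrightarrow> b \<in> H2 \<Longrightarrow> V (\<lambda>n. a n + b n) = (\<lambda>n. V a n + V b n)"
    and scale: "a \<in> H2 \<Longrightarrow> V (\<lambda>n. c * a n) = (\<lambda>n. c * V a n)"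
    and sqnorm_bound: "a \<in> H2 \<Longrightarrow> h2_sqnorm (V a) \<le> K * h2_sqnorm a"

lemma bounded_H2_operator_if_bounded_op_H2:
  assumes "bounded_op_H2 V" shows "\<exists>K. bounded_H2_operator V K"
proof -
  from assms have maps_H2: "\<And>a. a \<in> H2 \<Longrightarrow> V a \<in> H2"
    and add: "\<And>a b. a \<in> H2 \<Longrightarrow> b \<in> H2 \<Longrightarrow> V (\<lambda>n. a n + b n) = (\<lambda>n. V a n + V b n)"
    and scale: "\<And>a c. a \<in> H2 \<Longrightarrow> V (\<lambda>n. c * a n) = (\<lambda>n. c * V a n)"
    and "\<exists>C. \<forall>a\<in>H2. h2_norm (V a) \<le> C * h2_norm a"
    unfolding bounded_op_H2_def by blast+
  then obtain C where C: "\<And>a. a \<in> H2 \<Longrightarrow> h2_norm (V a) \<le> C * h2_norm a"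
    by blast
  have h2_norm: "h2_norm a = sqrt (h2_sqnorm a)" for a
    by (simp add: h2_norm_def h2_sqnorm_def)
  have sqnorm_bound: "h2_sqnorm (V a) \<le> C\<^sup>2 * h2_sqnorm a" if a: "a \<in> H2" for a
  proof -
    have Va: "0 \<le> h2_sqnorm (V a)" by (rule h2_sqnorm_nonneg[OF maps_H2[OF a]])
    have "h2_sqnorm (V a) = (h2_norm (V a))\<^sup>2"
      using Va by (simp add: h2_norm)
    also have "\<dots> \<le> (C * h2_norm a)\<^sup>2"
      by (rule power_mono[OF C[OF a]]) (simp add: h2_norm Va)
    also have "\<dots> = C\<^sup>2 * h2_sqnorm a"
      using h2_sqnorm_nonneg[OF a] by (simp add: h2_norm power_mult_distrib)
    finally show ?thesis .
  qed
  have "bounded_H2_operator V (C\<^sup>2)"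
    by (intro bounded_H2_operator.intro maps_H2 add scale sqnorm_bound)
  then show ?thesis by blast
qed

context bounded_H2_operator
begin

lemma diff:
  assumes a: "a \<in> H2" and b: "b \<in> H2" shows "V (\<lambda>n. a n - b n) = (\<lambda>n. V a n - V b n)"
proof -
  have "V (\<lambda>n. a n - b n) = V (\<lambda>n. a n + (-1) * b n)" by simp
  also have "\<dots> = (\<lambda>n. V a n + V (\<lambda>n. (-1) * b n) n)"
    by (rule add[OF a H2_scale[OF b]])
  also have "\<dots> = (\<lambda>n. V a n - V b n)" using scale[OF b, of "-1"] by simp
  finally show ?thesis .
qed

lemma h_ser_add:
  assumes "a \<in> H2" and "b \<in> H2"
  shows "h_ser V (\<lambda>n. a n + b n) k = h_ser V a k + h_ser V b k"
  using add[OF funpow_shift_in_H2[OF assms(1), THEN conjunct1] funpow_shift_in_H2[OF assms(2), THEN conjunct1]]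
  by (simp add: h_ser_eq funpow_shift_add)

lemma h_ser_scale: "a \<in> H2 \<Longrightarrow> h_ser V (\<lambda>n. c * a n) k = c * h_ser V a k"
  using scale[OF funpow_shift_in_H2[THEN conjunct1]] by (simp add: h_ser_eq funpow_shift_scale)

lemma h_ser_diff:
  assumes "a \<in> H2" and "b \<in> H2"
  shows "h_ser V (\<lambda>n. a n - b n) k = h_ser V a k - h_ser V b k"
  using diff[OF funpow_shift_in_H2[OF assms(1), THEN conjunct1] funpow_shift_in_H2[OF assms(2), THEN conjunct1]]
  by (simp add: h_ser_eq funpow_shift_diff)

lemma h_ser_trunc: "h_ser V (trunc M a) k = (\<Sum>j<M. a j * h_ser V (basis j) k)"
proof (induction M)
  case 0
  have "trunc 0 a = (\<lambda>n. 0 * a n)" by (simp add: trunc_def)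
  then show ?case using h_ser_scale[OF H2_zero, of 0] by simp
next
  case (Suc M)
  have "h_ser V (trunc (Suc M) a) k = h_ser V (trunc M a) k + h_ser V (\<lambda>n. a M * basis M n) k"
    unfolding trunc_Suc by (rule h_ser_add[OF H2_trunc H2_scale[OF H2_basis]])
  also have "\<dots> = h_ser V (trunc M a) k + a M * h_ser V (basis M) k"
    by (simp only: h_ser_scale[OF H2_basis])
  finally show ?case by (simp add: Suc.IH)
qed

lemma norm_h_ser_sq_le: "a \<in> H2 \<Longrightarrow> (cmod (h_ser V a k))\<^sup>2 \<le> K * h2_sqnorm a"
proof -
  assume a: "a \<in> H2"
  define b where "b = (shift ^^ nat (- k)) a"
  have b: "b \<in> H2" "h2_sqnorm b = h2_sqnorm a"
    using funpow_shift_in_H2[OF a] by (simp_all add: b_def)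
  have "(cmod (h_ser V a k))\<^sup>2 = (\<Sum>n\<in>{nat k}. (cmod (V b n))\<^sup>2)"
    by (simp add: h_ser_eq b_def)
  also have "\<dots> \<le> h2_sqnorm (V b)"
    by (rule sum_norm_sq_le_h2_sqnorm[OF maps_H2[OF b(1)]]) simp
  also have "\<dots> \<le> K * h2_sqnorm a"
    using sqnorm_bound[OF b(1)] b(2) by simp
  finally show ?thesis .
qed

lemma h_ser_trunc_tendsto:
  assumes a: "a \<in> H2" shows "(\<lambda>M. h_ser V (trunc M a) k) \<longlonglongrightarrow> h_ser V a k"
proof (rule tendsto_of_sq_dist_le[where c = K and e = "\<lambda>M. h2_sqnorm (\<lambda>n. a n - trunc M a n)"])
  fix M
  have "(cmod (h_ser V (trunc M a) k - h_ser V a k))\<^sup>2 = (cmod (h_ser V (\<lambda>n. a n - trunc M a n) k))\<^sup>2"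
    by (simp add: h_ser_diff[OF a H2_trunc] norm_minus_commute)
  also have "\<dots> \<le> K * h2_sqnorm (\<lambda>n. a n - trunc M a n)"
    by (rule norm_h_ser_sq_le[OF H2_diff[OF a H2_trunc]])
  finally show "(cmod (h_ser V (trunc M a) k - h_ser V a k))\<^sup>2 \<le> K * h2_sqnorm (\<lambda>n. a n - trunc M a n)" .
qed (rule h2_sqnorm_trunc_tendsto[OF a])

lemma h_ser_trunc_translate:
  assumes "\<And>j k. h_ser V (basis j) k = h_ser V (basis 0) (k - int j)"
  shows "h_ser V (trunc M a) k = (\<Sum>j<M. a j * h_ser V (basis 0) (k - int j))"
  by (simp only: h_ser_trunc assms[of _ k])

lemma toeplitz_if_h_ser_basis_translate:
  assumes translate: "\<And>j k. h_ser V (basis j) k = h_ser V (basis 0) (k - int j)"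
  shows "toeplitz V"
  unfolding toeplitz_def
proof (intro ballI ext)
  fix a i assume a: "a \<in> H2"
  let ?c = "h_ser V (basis 0)"
  have coord: "V b i = h_ser V b (int i)" for b i
    by (simp add: h_ser_eq)
  have "V (trunc (Suc M) (shift a)) (Suc i) = V (trunc M a) i" for M
  proof -
    have "V (trunc (Suc M) (shift a)) (Suc i) = (\<Sum>j<Suc M. shift a j * ?c (int (Suc i) - int j))"
      by (simp only: coord h_ser_trunc_translate[OF translate])
    also have "\<dots> = (\<Sum>j<M. a j * ?c (int i - int j))"
      unfolding sum.lessThan_Suc_shift by (simp add: shift_def)
    also have "\<dots> = V (trunc M a) i"
      by (simp only: coord h_ser_trunc_translate[OF translate])
    finally show ?thesis .
  qed
  moreover have "(\<lambda>M. V (trunc (Suc M) (shift a)) (Suc i)) \<longlonglongrightarrow> V (shift a) (Suc i)"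
    using h_ser_trunc_tendsto[OF shift_in_H2(1)[OF a], of "int (Suc i)"]
    unfolding coord[symmetric] by (rule LIMSEQ_Suc)
  moreover have "(\<lambda>M. V (trunc M a) i) \<longlonglongrightarrow> V a i"
    using h_ser_trunc_tendsto[OF a, of "int i"] unfolding coord[symmetric] .
  ultimately have "V (shift a) (Suc i) = V a i"
    using LIMSEQ_unique by simp
  then show "shift_adj (V (shift a)) i = V a i"
    by (simp add: shift_adj_def)
qed

end

locale toeplitz_H2_operator = bounded_H2_operator +
  assumes toeplitz: "toeplitz V"
begin

lemma shift_coord:
  assumes "a \<in> H2" shows "V (shift a) (Suc i) = V a i"
proof -
  have "shift_adj (V (shift a)) i = V a i"
    using toeplitz assms unfolding toeplitz_def by simp
  then show ?thesis by (simp add: shift_adj_def)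
qed

lemma funpow_shift_coord: "a \<in> H2 \<Longrightarrow> V ((shift ^^ p) a) (i + p) = V a i"
proof (induction p arbitrary: i)
  case (Suc p)
  have "V ((shift ^^ Suc p) a) (i + Suc p) = V ((shift ^^ p) a) (i + p)"
    using shift_coord funpow_shift_in_H2[OF Suc.prems] by simp
  with Suc show ?case by simp
qed simp

lemma h_ser_eq_funpow_shift:
  assumes a: "a \<in> H2" and p: "0 \<le> k + int p"
  shows "h_ser V a k = V ((shift ^^ p) a) (nat (k + int p))"
proof -
  define q where "q = nat (- k)"
  have q: "q \<le> p" "nat k + (p - q) = nat (k + int p)"
    using p by (auto simp: q_def)
  have "h_ser V a k = V ((shift ^^ q) a) (nat k)"
    by (simp add: h_ser_eq q_def)
  also have "\<dots> = V ((shift ^^ (p - q)) ((shift ^^ q) a)) (nat k + (p - q))"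
    by (rule funpow_shift_coord[symmetric]) (use funpow_shift_in_H2[OF a] in blast)
  also have "(shift ^^ (p - q)) ((shift ^^ q) a) = (shift ^^ p) a"
    using funpow_add[of "p - q" q shift] q(1) by simp
  finally show ?thesis
    using q(2) by simp
qed

lemma h_ser_basis_translate: "h_ser V (basis j) k = h_ser V (basis 0) (k - int j)"
proof -
  define p where "p = nat (- k)"
  have p: "0 \<le> k + int p" "0 \<le> k - int j + int (j + p)"
    by (simp_all add: p_def)
  have "h_ser V (basis j) k = V (basis (j + p)) (nat (k + int p))"
    by (simp add: h_ser_eq_funpow_shift[OF H2_basis p(1)] funpow_shift_basis)
  also have "\<dots> = h_ser V (basis 0) (k - int j)"
    by (simp add: h_ser_eq_funpow_shift[OF H2_basis p(2)] funpow_shift_basis)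
  finally show ?thesis .
qed

text \<open>One shift by \<open>p\<close> moves all of \<open>S\<close> into the nonnegative coefficients, where \<open>h_ser\<close>
  reads off coefficients of \<open>V\<close> applied to a vector of the same norm.\<close>

lemma sum_h_ser_sq_le:
  assumes a: "a \<in> H2" and S: "finite S"
  shows "(\<Sum>k\<in>S. (cmod (h_ser V a k))\<^sup>2) \<le> K * h2_sqnorm a"
proof -
  obtain p where bound: "\<forall>m\<in>(\<lambda>k. nat (- k)) ` S. m \<le> p"
    using S finite_nat_set_iff_bounded_le by blast
  have p: "0 \<le> k + int p" if "k \<in> S" for k
  proof -
    have "nat (- k) \<le> p" using bound that by blast
    then show ?thesis by (simp add: nat_le_iff)
  qed
  have inj: "inj_on (\<lambda>k. nat (k + int p)) S"
  proof (rule inj_onI)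
    fix x y assume "x \<in> S" "y \<in> S" "nat (x + int p) = nat (y + int p)"
    then show "x = y" using p[of x] p[of y] by (simp add: eq_nat_nat_iff)
  qed
  define b where "b = (shift ^^ p) a"
  have b: "b \<in> H2" "h2_sqnorm b = h2_sqnorm a"
    using funpow_shift_in_H2[OF a] by (simp_all add: b_def)
  have "(\<Sum>k\<in>S. (cmod (h_ser V a k))\<^sup>2) = (\<Sum>k\<in>S. (cmod (V b (nat (k + int p))))\<^sup>2)"
    by (intro sum.cong refl) (simp add: h_ser_eq_funpow_shift[OF a p] b_def)
  also have "\<dots> = (\<Sum>i\<in>(\<lambda>k. nat (k + int p)) ` S. (cmod (V b i))\<^sup>2)"
    by (subst sum.reindex[OF inj]) simp
  also have "\<dots> \<le> h2_sqnorm (V b)"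
    by (rule sum_norm_sq_le_h2_sqnorm[OF maps_H2[OF b(1)]]) (use S in simp)
  also have "\<dots> \<le> K * h2_sqnorm a"
    using sqnorm_bound[OF b(1)] b(2) by simp
  finally show ?thesis .
qed

lemma h_ser_reflect_H2:
  assumes a: "a \<in> H2"
  shows "(\<lambda>m. h_ser V a (n - int m)) \<in> H2"
    and "h2_sqnorm (\<lambda>m. h_ser V a (n - int m)) \<le> K * h2_sqnorm a"
proof -
  have partial: "(\<Sum>m<M. (cmod (h_ser V a (n - int m)))\<^sup>2) \<le> K * h2_sqnorm a" for M
  proof -
    have "(\<Sum>m<M. (cmod (h_ser V a (n - int m)))\<^sup>2)
        = (\<Sum>k\<in>(\<lambda>m. n - int m) ` {..<M}. (cmod (h_ser V a k))\<^sup>2)"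
      by (subst sum.reindex) (auto simp: inj_on_def)
    also have "\<dots> \<le> K * h2_sqnorm a"
      by (rule sum_h_ser_sq_le[OF a]) simp
    finally show ?thesis .
  qed
  have summable: "summable (\<lambda>m. (cmod (h_ser V a (n - int m)))\<^sup>2)"
    by (rule summableI_nonneg_bounded[OF _ partial]) simp
  then show "(\<lambda>m. h_ser V a (n - int m)) \<in> H2"
    by (simp add: H2_def)
  show "h2_sqnorm (\<lambda>m. h_ser V a (n - int m)) \<le> K * h2_sqnorm a"
    using suminf_le_const[OF summable partial] by (simp add: h2_sqnorm_def)
qed

lemma conv_ok_h_ser: "f \<in> H2 \<Longrightarrow> g \<in> H2 \<Longrightarrow> conv_ok (h_ser V f) g n"
  unfolding conv_ok_def by (rule cauchy_schwarz_H2(1)[OF h_ser_reflect_H2(1)])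

lemma norm_conv_coeff_h_ser_sq_le:
  assumes f: "f \<in> H2" and g: "g \<in> H2"
  shows "(cmod (conv_coeff (h_ser V f) g n))\<^sup>2 \<le> K * h2_sqnorm f * h2_sqnorm g"
proof -
  have "(cmod (conv_coeff (h_ser V f) g n))\<^sup>2 \<le> h2_sqnorm (\<lambda>m. h_ser V f (n - int m)) * h2_sqnorm g"
    unfolding conv_coeff_def by (rule cauchy_schwarz_H2(2)[OF h_ser_reflect_H2(1)[OF f] g])
  also have "\<dots> \<le> K * h2_sqnorm f * h2_sqnorm g"
    by (rule mult_right_mono[OF h_ser_reflect_H2(2)[OF f] h2_sqnorm_nonneg[OF g]])
  finally show ?thesis .
qed

lemma conv_coeff_h_ser_diff:
  assumes "f \<in> H2" "f' \<in> H2" "g \<in> H2"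
  shows "conv_coeff (h_ser V (\<lambda>k. f k - f' k)) g n = conv_coeff (h_ser V f) g n - conv_coeff (h_ser V f') g n"
proof -
  have "summable (\<lambda>m. h_ser V f (n - int m) * g m)" "summable (\<lambda>m. h_ser V f' (n - int m) * g m)"
    using conv_ok_h_ser[OF assms(1,3)] conv_ok_h_ser[OF assms(2,3)]
    unfolding conv_ok_def by (blast intro: summable_norm_cancel)+
  then show ?thesis
    by (simp add: conv_coeff_def h_ser_diff[OF assms(1,2)] left_diff_distrib suminf_diff)
qed

lemma conv_coeff_trunc_right_tendsto:
  assumes "f \<in> H2" "g \<in> H2"
  shows "(\<lambda>N. conv_coeff (h_ser V f) (trunc N g) n) \<longlonglongrightarrow> conv_coeff (h_ser V f) g n"
  using conv_ok_h_ser[OF assms] unfolding conv_coeff_trunc unfolding conv_coeff_def conv_ok_def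
  by (rule summable_LIMSEQ[OF summable_norm_cancel])

lemma conv_coeff_trunc_left_tendsto:
  assumes f: "f \<in> H2" and g: "g \<in> H2"
  shows "(\<lambda>N. conv_coeff (h_ser V (trunc N f)) g n) \<longlonglongrightarrow> conv_coeff (h_ser V f) g n"
proof (rule tendsto_of_sq_dist_le[where c = "K * h2_sqnorm g" and e = "\<lambda>N. h2_sqnorm (\<lambda>k. f k - trunc N f k)"])
  fix N
  have "(cmod (conv_coeff (h_ser V (trunc N f)) g n - conv_coeff (h_ser V f) g n))\<^sup>2
      = (cmod (conv_coeff (h_ser V (\<lambda>k. f k - trunc N f k)) g n))\<^sup>2"
    by (simp add: conv_coeff_h_ser_diff[OF f H2_trunc g] norm_minus_commute)
  also have "\<dots> \<le> K * h2_sqnorm (\<lambda>k. f k - trunc N f k) * h2_sqnorm g"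
    by (rule norm_conv_coeff_h_ser_sq_le[OF H2_diff[OF f H2_trunc] g])
  finally show "(cmod (conv_coeff (h_ser V (trunc N f)) g n - conv_coeff (h_ser V f) g n))\<^sup>2
      \<le> K * h2_sqnorm g * h2_sqnorm (\<lambda>k. f k - trunc N f k)"
    by (simp only: ac_simps)
qed (rule h2_sqnorm_trunc_tendsto[OF f])

lemma conv_coeff_h_ser_trunc_commute:
  "conv_coeff (h_ser V (trunc M f)) (trunc N g) n = conv_coeff (h_ser V (trunc N g)) (trunc M f) n"
proof -
  let ?c = "h_ser V (basis 0)"
  have expand: "conv_coeff (h_ser V (trunc M f)) (trunc N g) n
      = (\<Sum>m<N. \<Sum>l<M. f l * g m * ?c (n - int l - int m))" for M N f g
    by (simp add: conv_coeff_trunc h_ser_trunc_translate[OF h_ser_basis_translate]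
        sum_distrib_left sum_distrib_right algebra_simps)
  show ?thesis
    unfolding expand by (subst sum.swap) (simp add: algebra_simps)
qed

text \<open>The identity holds for truncations, and the truncations converge in each argument separately.\<close>

lemma conv_coeff_h_ser_commute:
  assumes f: "f \<in> H2" and g: "g \<in> H2"
  shows "conv_coeff (h_ser V f) g n = conv_coeff (h_ser V g) f n"
proof -
  have trunc_commute: "conv_coeff (h_ser V f) (trunc N g) n = conv_coeff (h_ser V (trunc N g)) f n" for N
  proof (rule LIMSEQ_unique)
    show "(\<lambda>M. conv_coeff (h_ser V (trunc M f)) (trunc N g) n) \<longlonglongrightarrow> conv_coeff (h_ser V f) (trunc N g) n"
      by (rule conv_coeff_trunc_left_tendsto[OF f H2_trunc])
    show "(\<lambda>M. conv_coeff (h_ser V (trunc M f)) (trunc N g) n) \<longlonglongrightarrow> conv_coeff (h_ser V (trunc N g)) f n"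
      unfolding conv_coeff_h_ser_trunc_commute[of _ f N g]
      by (rule conv_coeff_trunc_right_tendsto[OF H2_trunc f])
  qed
  show ?thesis
  proof (rule LIMSEQ_unique)
    show "(\<lambda>N. conv_coeff (h_ser V f) (trunc N g) n) \<longlonglongrightarrow> conv_coeff (h_ser V f) g n"
      by (rule conv_coeff_trunc_right_tendsto[OF f g])
    show "(\<lambda>N. conv_coeff (h_ser V f) (trunc N g) n) \<longlonglongrightarrow> conv_coeff (h_ser V g) f n"
      unfolding trunc_commute by (rule conv_coeff_trunc_left_tendsto[OF g f])
  qed
qed

lemma sub_symbol_eq: "f \<in> H2 \<Longrightarrow> g \<in> H2 \<Longrightarrow> sub_symbol_eq V f g"
  unfolding sub_symbol_eq_def by (blast intro: conv_ok_h_ser conv_coeff_h_ser_commute)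

end

theorem proposition2:
  assumes "bounded_op_H2 V"
  shows "toeplitz V \<longleftrightarrow>
    (\<forall>f\<in>H2. \<forall>g\<in>H2. f \<noteq> (\<lambda>_. 0) \<longrightarrow> g \<noteq> (\<lambda>_. 0) \<longrightarrow> sub_symbol_eq V f g)"
proof -
  obtain K where "bounded_H2_operator V K"
    using bounded_H2_operator_if_bounded_op_H2[OF assms] by blast
  then interpret bounded_H2_operator V K .
  show ?thesis
  proof
    assume "toeplitz V"
    then interpret toeplitz_H2_operator V K
      by unfold_locales
    show "\<forall>f\<in>H2. \<forall>g\<in>H2. f \<noteq> (\<lambda>_. 0) \<longrightarrow> g \<noteq> (\<lambda>_. 0) \<longrightarrow> sub_symbol_eq V f g"
      by (blast intro: sub_symbol_eq)
  next
    assume "\<forall>f\<in>H2. \<forall>g\<in>H2. f \<noteq> (\<lambda>_. 0) \<longrightarrow> g \<noteq> (\<lambda>_. 0) \<longrightarrow> sub_symbol_eq V f g"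
    then have "sub_symbol_eq V (basis j) (basis 0)" for j
      using H2_basis basis_nonzero by blast
    then show "toeplitz V"
      by (intro toeplitz_if_h_ser_basis_translate h_ser_basis_translate_if_sub_symbol_eq)
  qed
qed

end
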